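(* Let $n\ge1$, $\varepsilon>0$, $A>0$, and define $$\Theta(\eta)=e^{-\varepsilon\left[A+(|x|^2+|y|^2)^2+\tau^2\right]^{1/2}},\qquad \eta=(x,y,\tau)\in\mathbb{H}^n.$$ Then $-\Delta_{\mathbb{H}}\Theta(\eta)\le 2\varepsilon(Q+2)\Theta(\eta)$ for all $\eta\in\mathbb{H}^n$.
   Context: $\mathbb{H}^n$ is $\mathbb{R}^{2n+1}$ with points $\eta=(x,y,\tau)$, $x,y\in\mathbb{R}^n$, $\tau\in\mathbb{R}$. The vector fields are $X_i=\partial_{x_i}-2y_i\partial_\tau$, $Y_i=\partial_{y_i}+2x_i\partial_\tau$ ($i=1,\dots,n$), the sub-Laplacian is $\Delta_{\mathbb{H}}=\sum_{i=1}^n(X_i^2+Y_i^2)$, and $Q=2n+2$. *)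

theory Defs
  imports "HOL-Analysis.Analysis"
begin

text \<open>Points of the Heisenberg group H^n are triples (x, y, tau) with x, y in R^n
  (the type real^'n, n = CARD('n) >= 1) and tau real. Functions on H^n are curried.\<close>

type_synonym 'n hfun = "real^'n \<Rightarrow> real^'n \<Rightarrow> real \<Rightarrow> real"

definition dx :: "'n::finite \<Rightarrow> 'n hfun \<Rightarrow> 'n hfun" where
  "dx i f = (\<lambda>x y t. deriv (\<lambda>s. f (x + s *\<^sub>R axis i 1) y t) 0)"

definition dy :: "'n::finite \<Rightarrow> 'n hfun \<Rightarrow> 'n hfun" where
  "dy i f = (\<lambda>x y t. deriv (\<lambda>s. f x (y + s *\<^sub>R axis i 1) t) 0)"

definition dtau :: "'n::finite hfun \<Rightarrow> 'n hfun" where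
  "dtau f = (\<lambda>x y t. deriv (\<lambda>s. f x y (t + s)) 0)"

definition Xfield :: "'n::finite \<Rightarrow> 'n hfun \<Rightarrow> 'n hfun" where
  "Xfield i f = (\<lambda>x y t. dx i f x y t - 2 * (y $ i) * dtau f x y t)"

definition Yfield :: "'n::finite \<Rightarrow> 'n hfun \<Rightarrow> 'n hfun" where
  "Yfield i f = (\<lambda>x y t. dy i f x y t + 2 * (x $ i) * dtau f x y t)"

definition subLaplacian :: "'n::finite hfun \<Rightarrow> 'n hfun" where
  "subLaplacian f = (\<lambda>x y t. \<Sum>i\<in>UNIV. Xfield i (Xfield i f) x y t + Yfield i (Yfield i f) x y t)"

definition homdim :: "'n::finite itself \<Rightarrow> real" where
  "homdim _ = 2 * real CARD('n) + 2"

end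

theory Submission
  imports Defs
begin

(* Theta depends only on r = |x|^2 + |y|^2 and tau, and X_i acts on functions of
   (r, tau, x_i, y_i) through the direction (X_i r, X_i tau, X_i x_i, X_i y_i) = (2 x_i, -2 y_i, 1, 0),
   so X_i^2 Theta follows from the chain rule; the automorphism (x, y, tau) |-> (-y, x, tau), which
   leaves Theta invariant, carries X_i to Y_i. With S = sqrt (A + r^2 + tau^2) this gives
     X_i^2 Theta = -2 eps Theta ((r + 2 x_i^2 + 2 y_i^2) / S - (2 eps / S^2 + 2 / S^3) (r x_i - tau y_i)^2).
   Dropping the squared term and summing over i and both fields,
   -Delta Theta <= 2 eps (2n + 4) Theta r / S <= 2 eps (Q + 2) Theta, because r <= S. *)

lemma deriv_compose_curve:
  fixes c :: "real \<Rightarrow> 'a::real_normed_vector" and \<Phi> :: "'a \<Rightarrow> real"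
  assumes c: "(c has_derivative (\<lambda>h. h *\<^sub>R v)) (at s)"
    and \<Phi>: "(\<Phi> has_derivative \<Phi>') (at (c s))"
  shows "deriv (\<lambda>s. \<Phi> (c s)) s = \<Phi>' v"
proof (rule DERIV_imp_deriv)
  interpret \<Phi>': linear \<Phi>' using has_derivative_linear[OF \<Phi>] .
  have "(\<lambda>h. \<Phi>' (h *\<^sub>R v)) = (*) (\<Phi>' v)"
    by (auto simp: \<Phi>'.scaleR)
  then show "((\<lambda>s. \<Phi> (c s)) has_real_derivative \<Phi>' v) (at s)"
    using has_derivative_compose[OF c \<Phi>] by (simp add: has_field_derivative_def)
qed

lemma norm_add_scaleR_axis_power2:
  fixes x :: "real^'n::finite"
  shows "norm (x + s *\<^sub>R axis i 1)^2 = norm x^2 + 2 * s * x$i + s^2"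
  unfolding power2_norm_eq_inner
  by (simp add: inner_add_left inner_add_right inner_axis inner_axis' algebra_simps power2_eq_square)

lemma nth_add_scaleR_axis:
  fixes x :: "real^'n::finite"
  shows "(x + s *\<^sub>R axis i 1)$i = x$i + s"
  by (simp add: axis_def)

lemma norm_power2_eq_sum_nth:
  fixes x :: "real^'n::finite"
  shows "norm x^2 = (\<Sum>i\<in>UNIV. (x$i)^2)"
  unfolding power2_norm_eq_inner by (simp add: inner_vec_def power2_eq_square)

lemma Xfield_chain_rule:
  fixes x y :: "real^'n::finite" and \<Phi> :: "real \<times> real \<times> real \<times> real \<Rightarrow> real"
  assumes \<Phi>: "(\<Phi> has_derivative \<Phi>') (at (norm x^2 + norm y^2, t, x$i, y$i))"
  shows "Xfield i (\<lambda>x y t. \<Phi> (norm x^2 + norm y^2, t, x$i, y$i)) x y t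
    = \<Phi>' (2 * x$i, -2 * y$i, 1, 0)"
proof -
  interpret \<Phi>': linear \<Phi>' using has_derivative_linear[OF \<Phi>] .
  have dx: "dx i (\<lambda>x y t. \<Phi> (norm x^2 + norm y^2, t, x$i, y$i)) x y t = \<Phi>' (2 * x$i, 0, 1, 0)"
    unfolding dx_def norm_add_scaleR_axis_power2 nth_add_scaleR_axis
    by (rule deriv_compose_curve[where \<Phi>=\<Phi> and \<Phi>'=\<Phi>'])
       (auto intro!: derivative_eq_intros simp: \<Phi> zero_prod_def)
  have dtau: "dtau (\<lambda>x y t. \<Phi> (norm x^2 + norm y^2, t, x$i, y$i)) x y t = \<Phi>' (0, 1, 0, 0)"
    unfolding dtau_def
    by (rule deriv_compose_curve[where \<Phi>=\<Phi> and \<Phi>'=\<Phi>'])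
       (auto intro!: derivative_eq_intros simp: \<Phi> zero_prod_def)
  have "Xfield i (\<lambda>x y t. \<Phi> (norm x^2 + norm y^2, t, x$i, y$i)) x y t
      = \<Phi>' ((2 * x$i, 0, 1, 0) - (2 * y$i) *\<^sub>R (0, 1, 0, 0))"
    unfolding Xfield_def dx dtau \<Phi>'.diff \<Phi>'.scaleR by simp
  then show ?thesis by simp
qed

lemma Yfield_eq_Xfield_rotate:
  "Yfield i f x y t = Xfield i (\<lambda>x y t. f (-y) x t) y (-x) t"
  by (simp add: Xfield_def Yfield_def dx_def dy_def dtau_def)

lemma Yfield_Yfield_eq_Xfield_Xfield_rotate:
  "Yfield i (Yfield i f) x y t = Xfield i (Xfield i (\<lambda>x y t. f (-y) x t)) y (-x) t"
proof -
  have "(\<lambda>x y t. Yfield i f (-y) x t) = Xfield i (\<lambda>x y t. f (-y) x t)"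
    by (intro ext) (simp add: Yfield_eq_Xfield_rotate)
  then show ?thesis
    by (simp add: Yfield_eq_Xfield_rotate[of i "Yfield i f"])
qed

(* The square of the Koranyi gauge ((|x|^2 + |y|^2)^2 + tau^2)^(1/4), made smooth by A > 0. *)
definition reg_gauge :: "real \<Rightarrow> real \<Rightarrow> real \<Rightarrow> real" where
  "reg_gauge A r t = sqrt (A + r^2 + t^2)"

lemma reg_gauge_pos: "A > 0 \<Longrightarrow> reg_gauge A r t > 0"
  unfolding reg_gauge_def by (simp add: add_pos_nonneg)

lemma abs_le_reg_gauge: "A > 0 \<Longrightarrow> \<bar>r\<bar> \<le> reg_gauge A r t"
  unfolding reg_gauge_def by (rule real_le_rsqrt) simp

lemma reg_gauge_has_derivative:
  fixes p :: "real \<times> real \<times> 'a::real_normed_vector"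
  assumes "A > 0"
  shows "((\<lambda>p. reg_gauge A (fst p) (fst (snd p))) has_derivative
     (\<lambda>h. (fst p * fst h + fst (snd p) * fst (snd h)) / reg_gauge A (fst p) (fst (snd p)))) (at p)"
proof -
  have "0 < A + (fst p)^2 + (fst (snd p))^2"
    using assms by (simp add: add_pos_nonneg)
  then show ?thesis
    unfolding reg_gauge_def by (auto intro!: derivative_eq_intros simp: fun_eq_iff field_simps)
qed

definition heis_theta :: "real \<Rightarrow> real \<Rightarrow> 'n::finite hfun" where
  "heis_theta eps A = (\<lambda>x y t. exp (- eps * reg_gauge A (norm x^2 + norm y^2) t))"

lemma heis_theta_pos: "heis_theta eps A x y t > 0"
  by (simp add: heis_theta_def)

lemma heis_theta_rotate: "(\<lambda>x y t. heis_theta eps A (-y) x t) = heis_theta eps A"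
  by (simp add: heis_theta_def add.commute fun_eq_iff)

lemma Xfield_heis_theta:
  fixes x y :: "real^'n::finite" and t :: real
  assumes "A > 0"
  defines "r \<equiv> norm x^2 + norm y^2" and "S \<equiv> reg_gauge A (norm x^2 + norm y^2) t"
  shows "Xfield i (heis_theta eps A) x y t = -2 * eps * heis_theta eps A x y t * (r * x$i - t * y$i) / S"
proof -
  define \<Phi> :: "real \<times> real \<times> real \<times> real \<Rightarrow> real"
    where "\<Phi> = (\<lambda>p. exp (- eps * reg_gauge A (fst p) (fst (snd p))))"
  have "(\<Phi> has_derivative (\<lambda>h. - eps * \<Phi> (r, t, x$i, y$i) * (r * fst h + t * fst (snd h)) / S))
      (at (r, t, x$i, y$i))"
    unfolding \<Phi>_def S_def r_def
    by (auto intro!: derivative_eq_intros reg_gauge_has_derivative[OF \<open>A > 0\<close>] simp: fun_eq_iff)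
  from Xfield_chain_rule[OF this[unfolded r_def]]
  have "Xfield i (heis_theta eps A) x y t = - eps * \<Phi> (r, t, x$i, y$i) * (r * (2 * x$i) + t * (-2 * y$i)) / S"
    by (simp add: heis_theta_def \<Phi>_def r_def)
  then show ?thesis
    by (simp add: heis_theta_def \<Phi>_def r_def S_def algebra_simps)
qed

lemma Xfield_Xfield_heis_theta:
  fixes x y :: "real^'n::finite" and t :: real
  assumes "A > 0"
  defines "r \<equiv> norm x^2 + norm y^2" and "S \<equiv> reg_gauge A (norm x^2 + norm y^2) t"
  shows "Xfield i (Xfield i (heis_theta eps A)) x y t
    = -2 * eps * heis_theta eps A x y t
        * ((r + 2 * (x$i)^2 + 2 * (y$i)^2) / S - (2 * eps / S^2 + 2 / S^3) * (r * x$i - t * y$i)^2)"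
proof -
  define G :: "real \<times> real \<times> real \<times> real \<Rightarrow> real"
    where "G = (\<lambda>p. reg_gauge A (fst p) (fst (snd p)))"
  define N :: "real \<times> real \<times> real \<times> real \<Rightarrow> real"
    where "N = (\<lambda>p. fst p * fst (snd (snd p)) - fst (snd p) * snd (snd (snd p)))"
  define \<Psi> where "\<Psi> = (\<lambda>p. -2 * eps * exp (- eps * G p) * N p / G p)"
  define p where "p = (r, t, x$i, y$i)"
  define \<Psi>' where "\<Psi>' = (\<lambda>h. -2 * eps * exp (- eps * S) *
      ((fst h * x$i + r * fst (snd (snd h)) - fst (snd h) * y$i - t * snd (snd (snd h))) / S
       - (eps / S + 1 / S^2) * N p * (r * fst h + t * fst (snd h)) / S))"
  have S: "G p = S" "S > 0"
    using reg_gauge_pos[OF \<open>A > 0\<close>] by (simp_all add: G_def p_def S_def r_def)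
  have G': "(G has_derivative (\<lambda>h. (r * fst h + t * fst (snd h)) / S)) (at p)"
    using reg_gauge_has_derivative[OF \<open>A > 0\<close>, of p] by (simp add: G_def p_def S_def r_def)
  have N': "(N has_derivative
      (\<lambda>h. fst h * x$i + r * fst (snd (snd h)) - fst (snd h) * y$i - t * snd (snd (snd h)))) (at p)"
    unfolding N_def p_def by (auto intro!: derivative_eq_intros)
  have "(\<Psi> has_derivative \<Psi>') (at p)"
    unfolding \<Psi>_def \<Psi>'_def using S
    by (auto intro!: derivative_eq_intros G' N' simp: fun_eq_iff field_simps power2_eq_square)
  moreover have "Xfield i (heis_theta eps A) = (\<lambda>x y t. \<Psi> (norm x^2 + norm y^2, t, x$i, y$i))"
    unfolding fun_eq_iff Xfield_heis_theta[OF \<open>A > 0\<close>]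
    by (simp add: \<Psi>_def G_def N_def heis_theta_def)
  ultimately have "Xfield i (Xfield i (heis_theta eps A)) x y t = \<Psi>' (2 * x$i, -2 * y$i, 1, 0)"
    using Xfield_chain_rule[of \<Psi> \<Psi>' x y t i] by (simp add: p_def r_def)
  also have "\<dots> = -2 * eps * exp (- eps * S)
        * ((r + 2 * (x$i)^2 + 2 * (y$i)^2) / S - (2 * eps / S^2 + 2 / S^3) * (r * x$i - t * y$i)^2)"
    unfolding \<Psi>'_def N_def p_def using S by (simp add: field_simps power2_eq_square power3_eq_cube)
  finally show ?thesis
    by (simp add: heis_theta_def S_def)
qed

lemma neg_Xfield_Xfield_heis_theta_le:
  fixes x y :: "real^'n::finite" and t :: real
  assumes "eps > 0" and "A > 0"
  defines "r \<equiv> norm x^2 + norm y^2" and "S \<equiv> reg_gauge A (norm x^2 + norm y^2) t"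
  shows "- Xfield i (Xfield i (heis_theta eps A)) x y t
    \<le> 2 * eps * heis_theta eps A x y t * (r + 2 * (x$i)^2 + 2 * (y$i)^2) / S"
proof -
  have "S > 0"
    unfolding S_def using reg_gauge_pos[OF \<open>A > 0\<close>] .
  then have "0 \<le> 2 * eps * heis_theta eps A x y t * ((2 * eps / S^2 + 2 / S^3) * (r * x$i - t * y$i)^2)"
    using \<open>eps > 0\<close> heis_theta_pos[of eps A x y t] by simp
  then show ?thesis
    unfolding Xfield_Xfield_heis_theta[OF \<open>A > 0\<close>] r_def S_def
    by (simp add: algebra_simps add_divide_distrib)
qed

lemma subLaplacian_heis_theta:
  "subLaplacian (heis_theta eps A) x y t
    = (\<Sum>i\<in>UNIV. Xfield i (Xfield i (heis_theta eps A)) x y t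
                 + Xfield i (Xfield i (heis_theta eps A)) y (-x) t)"
  unfolding subLaplacian_def Yfield_Yfield_eq_Xfield_Xfield_rotate heis_theta_rotate ..

lemma neg_subLaplacian_heis_theta_le:
  fixes x y :: "real^'n::finite" and t :: real
  assumes "eps > 0" and "A > 0"
  shows "- subLaplacian (heis_theta eps A) x y t
    \<le> 2 * eps * (2 * real CARD('n) + 4) * heis_theta eps A x y t"
proof -
  define r where "r = norm x^2 + norm y^2"
  define S where "S = reg_gauge A r t"
  define B where "B i = 2 * eps * heis_theta eps A x y t * (r + 2 * (x$i)^2 + 2 * (y$i)^2) / S" for i
  have at_xy: "- Xfield i (Xfield i (heis_theta eps A)) x y t \<le> B i" for i
    using neg_Xfield_Xfield_heis_theta_le[OF assms, of i x y t] by (simp add: B_def r_def S_def)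
  have at_rotated: "- Xfield i (Xfield i (heis_theta eps A)) y (-x) t \<le> B i" for i
    using neg_Xfield_Xfield_heis_theta_le[OF assms, of i y "-x" t]
    by (simp add: B_def r_def S_def heis_theta_def ac_simps)
  have "- subLaplacian (heis_theta eps A) x y t \<le> (\<Sum>i\<in>UNIV. 2 * B i)"
    unfolding subLaplacian_heis_theta sum_negf[symmetric]
    by (rule sum_mono) (use at_xy at_rotated in \<open>smt (verit)\<close>)
  also have "\<dots> = 4 * eps * heis_theta eps A x y t / S * (\<Sum>i\<in>UNIV. r + 2 * (x$i)^2 + 2 * (y$i)^2)"
    by (simp add: B_def sum_distrib_left mult.assoc)
  also have "(\<Sum>i\<in>UNIV. r + 2 * (x$i)^2 + 2 * (y$i)^2) = (real CARD('n) + 2) * r"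
    by (simp add: sum.distrib sum_distrib_left[symmetric] norm_power2_eq_sum_nth[symmetric] r_def
        algebra_simps)
  also have "4 * eps * heis_theta eps A x y t / S * ((real CARD('n) + 2) * r)
      = 2 * eps * (2 * real CARD('n) + 4) * heis_theta eps A x y t * (r / S)"
    by (simp add: field_simps)
  also have "\<dots> \<le> 2 * eps * (2 * real CARD('n) + 4) * heis_theta eps A x y t"
    using abs_le_reg_gauge[OF \<open>A > 0\<close>, of r t] reg_gauge_pos[OF \<open>A > 0\<close>, of r t] \<open>eps > 0\<close>
      heis_theta_pos[of eps A x y t]
    by (intro mult_left_le) (auto simp: S_def)
  finally show ?thesis .
qed

theorem mainTheorem2:
  fixes eps A :: real and x y :: "real^'n::finite" and tau :: real
  assumes "eps > 0" and "A > 0"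
  defines "Theta \<equiv> (\<lambda>(x::real^'n) (y::real^'n) (t::real).
              exp (- eps * sqrt (A + (norm x ^ 2 + norm y ^ 2) ^ 2 + t ^ 2)))"
  shows "- subLaplacian Theta x y tau \<le> 2 * eps * (homdim TYPE('n) + 2) * Theta x y tau"
proof -
  have "Theta = heis_theta eps A"
    by (simp add: Theta_def heis_theta_def reg_gauge_def fun_eq_iff)
  with neg_subLaplacian_heis_theta_le[OF assms(1,2)] show ?thesis
    by (simp add: homdim_def algebra_simps)
qed

end
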